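(* Let $\mathbf{C}$ be a category of $\mathbf{FI}$ type and $M_\bullet$ a finitely generated $\mathbf{C}$-module over $\mathbb{C}$. Then there exists a set $X$ of objects which is upward closed (if $c\in X$ and $c\leq d$ then $d\in X$) and cofinal (every object is $\leq$ some element of $X$) such that for every $c\in X$ and $d\geq c$ the induced map of coinvariants $M_c/G_c\to M_d/G_d$ is an isomorphism. More generally, for every free $\mathbf{C}$-module $F_\bullet$ the coinvariants of $F\otimes M$ stabilize in the same sense; in particular the spaces $\mathrm{Hom}_{G_c}(F_c,M_c)$ stabilize in the same sense.
   Context: A category $\mathbf{C}$ is of $\mathbf{FI}$ type if: (1) all Hom-sets are finite; (2) every morphism is a monomorphism and every endomorphism is an isomorphism; (3) for all objects $c,d$ the group $G_d=\mathrm{Aut}_{\mathbf{C}}(d)$ acts transitively on $\mathrm{Hom}_{\mathbf{C}}(c,d)$; (4) for every $d$ only finitely many isomorphism classes of $c$ have $\mathrm{Hom}(c,d)\neq\emptyset$; (5) every pair $c_1\to d\leftarrow c_2$ has a pullback, and every pair $f_i:p\to c_i$ has a weak push-out, i.e. a commutative pullback square $g_i:c_i\to d$ such that for every other pullback square $h_i:c_i\to z$ with $h_1f_1=h_2f_2$ there is a unique $h:d\to z$ with $hg_i=h_i$. Write $c\leq d$ if $\mathrm{Hom}(c,d)\neq\emptyset$; $G_c=\mathrm{Aut}(c)$. A $\mathbf{C}$-module is a functor to complex vector spaces; finitely generated means some finite set of elements lies in no proper submodule. For any $\mathbf{C}$-module the coinvariants $M_c/G_c$ form a $\mathbf{C}$-module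 (the map $M_c/G_c\to M_d/G_d$ is independent of the chosen morphism $c\to d$). For a finite-dimensional $G_c$-representation $V$, $\mathrm{Ind}_c(V)$ is $d\mapsto\mathbb{C}[\mathrm{Hom}(c,d)]\otimes_{\mathbb{C}[G_c]}V$; a free module is a finite direct sum of these. Tensor products are pointwise. The spaces $\mathrm{Hom}_{G_c}(F_c,M_c)$ are identified with $(F^*_c\otimes M_c)/G_c$, where $F^*=\bigoplus\mathrm{Ind}_{c_i}(V_i^* )$ for $F=\bigoplus\mathrm{Ind}_{c_i}(V_i)$. *)

theory Defs
  imports Complex_Main "HOL-Library.Function_Algebras"
begin

record ('o, 'm) cat =
  Ob   :: "'o set"
  Mor  :: "'m set"
  Dom  :: "'m \<Rightarrow> 'o"
  Cod  :: "'m \<Rightarrow> 'o"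
  Comp :: "'m \<Rightarrow> 'm \<Rightarrow> 'm"   (* Comp C g f  =  g \<circ> f  (first f, then g) *)
  Idm  :: "'o \<Rightarrow> 'm"

definition Hom :: "('o, 'm) cat \<Rightarrow> 'o \<Rightarrow> 'o \<Rightarrow> 'm set" where
  "Hom C c d = {f \<in> Mor C. Dom C f = c \<and> Cod C f = d}"

definition is_category :: "('o, 'm) cat \<Rightarrow> bool" where
  "is_category C \<longleftrightarrow>
     (\<forall>f \<in> Mor C. Dom C f \<in> Ob C \<and> Cod C f \<in> Ob C) \<and>
     (\<forall>c \<in> Ob C. Idm C c \<in> Hom C c c) \<and>
     (\<forall>f \<in> Mor C. \<forall>g \<in> Mor C. Cod C f = Dom C g \<longrightarrow> Comp C g f \<in> Hom C (Dom C f) (Cod C g)) \<and>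
     (\<forall>f \<in> Mor C. \<forall>g \<in> Mor C. \<forall>h \<in> Mor C. Cod C f = Dom C g \<and> Cod C g = Dom C h \<longrightarrow>
          Comp C h (Comp C g f) = Comp C (Comp C h g) f) \<and>
     (\<forall>f \<in> Mor C. Comp C f (Idm C (Dom C f)) = f \<and> Comp C (Idm C (Cod C f)) f = f)"

text \<open>Automorphism group \<open>G_d = Aut(d)\<close> (as a set of morphisms, group law \<open>Comp C\<close>).\<close>
definition Aut :: "('o, 'm) cat \<Rightarrow> 'o \<Rightarrow> 'm set" where
  "Aut C d = {g \<in> Hom C d d. \<exists>h \<in> Hom C d d. Comp C h g = Idm C d \<and> Comp C g h = Idm C d}"

definition iso_obj :: "('o, 'm) cat \<Rightarrow> 'o \<Rightarrow> 'o \<Rightarrow> bool" where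
  "iso_obj C c c' \<longleftrightarrow> (\<exists>f \<in> Hom C c c'. \<exists>g \<in> Hom C c' c. Comp C g f = Idm C c \<and> Comp C f g = Idm C c')"

definition cle :: "('o, 'm) cat \<Rightarrow> 'o \<Rightarrow> 'o \<Rightarrow> bool" where
  "cle C c d \<longleftrightarrow> Hom C c d \<noteq> {}"

definition pullback_square :: "('o, 'm) cat \<Rightarrow> 'm \<Rightarrow> 'm \<Rightarrow> 'm \<Rightarrow> 'm \<Rightarrow> bool" where
  "pullback_square C f1 f2 g1 g2 \<longleftrightarrow>
     Comp C g1 f1 = Comp C g2 f2 \<and>
     (\<forall>q \<in> Ob C. \<forall>q1 \<in> Hom C q (Cod C f1). \<forall>q2 \<in> Hom C q (Cod C f2).
        Comp C g1 q1 = Comp C g2 q2 \<longrightarrow>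
        (\<exists>!u. u \<in> Hom C q (Dom C f1) \<and> Comp C f1 u = q1 \<and> Comp C f2 u = q2))"

definition FI_type :: "('o, 'm) cat \<Rightarrow> bool" where
  "FI_type C \<longleftrightarrow>
     is_category C \<and>
     \<comment> \<open>(1) finite Hom-sets\<close>
     (\<forall>c \<in> Ob C. \<forall>d \<in> Ob C. finite (Hom C c d)) \<and>
     \<comment> \<open>(2) every morphism is a monomorphism, every endomorphism is an isomorphism\<close>
     (\<forall>f \<in> Mor C. \<forall>g \<in> Mor C. \<forall>h \<in> Mor C.
        Cod C g = Dom C f \<and> Cod C h = Dom C f \<and> Dom C g = Dom C h \<and> Comp C f g = Comp C f h \<longrightarrow> g = h) \<and>
     (\<forall>c \<in> Ob C. Hom C c c \<subseteq> Aut C c) \<and>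
     \<comment> \<open>(3) \<open>G_d\<close> acts transitively on \<open>Hom(c,d)\<close>\<close>
     (\<forall>c \<in> Ob C. \<forall>d \<in> Ob C. \<forall>f \<in> Hom C c d. \<forall>f' \<in> Hom C c d. \<exists>g \<in> Aut C d. Comp C g f = f') \<and>
     \<comment> \<open>(4) finitely many isomorphism classes below each object\<close>
     (\<forall>d \<in> Ob C. \<exists>S. finite S \<and> S \<subseteq> Ob C \<and> (\<forall>c \<in> Ob C. cle C c d \<longrightarrow> (\<exists>s \<in> S. iso_obj C c s))) \<and>
     \<comment> \<open>(5a) pullbacks\<close>
     (\<forall>c1 \<in> Ob C. \<forall>c2 \<in> Ob C. \<forall>d \<in> Ob C. \<forall>f1 \<in> Hom C c1 d. \<forall>f2 \<in> Hom C c2 d.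
        \<exists>p \<in> Ob C. \<exists>p1 \<in> Hom C p c1. \<exists>p2 \<in> Hom C p c2. pullback_square C p1 p2 f1 f2) \<and>
     \<comment> \<open>(5b) weak push-outs\<close>
     (\<forall>p \<in> Ob C. \<forall>c1 \<in> Ob C. \<forall>c2 \<in> Ob C. \<forall>f1 \<in> Hom C p c1. \<forall>f2 \<in> Hom C p c2.
        \<exists>d \<in> Ob C. \<exists>g1 \<in> Hom C c1 d. \<exists>g2 \<in> Hom C c2 d.
          pullback_square C f1 f2 g1 g2 \<and>
          (\<forall>z \<in> Ob C. \<forall>h1 \<in> Hom C c1 z. \<forall>h2 \<in> Hom C c2 z.
             pullback_square C f1 f2 h1 h2 \<longrightarrow>
             (\<exists>!h. h \<in> Hom C d z \<and> Comp C h g1 = h1 \<and> Comp C h g2 = h2)))"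

text \<open>A \<open>C\<close>-module: each \<open>M c\<close> is a complex subspace of an ambient complex vector space
  (scalar multiplication \<open>sc\<close>), and \<open>act f\<close> is a linear map \<open>M (Dom f) \<rightarrow> M (Cod f)\<close>, functorially.\<close>
definition C_module :: "('o, 'm) cat \<Rightarrow> (complex \<Rightarrow> 'v::ab_group_add \<Rightarrow> 'v) \<Rightarrow> ('o \<Rightarrow> 'v set) \<Rightarrow> ('m \<Rightarrow> 'v \<Rightarrow> 'v) \<Rightarrow> bool" where
  "C_module C sc M act \<longleftrightarrow>
     (\<forall>c \<in> Ob C. module.subspace sc (M c)) \<and>
     (\<forall>f \<in> Mor C. \<forall>x \<in> M (Dom C f). act f x \<in> M (Cod C f)) \<and>
     (\<forall>f \<in> Mor C. \<forall>x \<in> M (Dom C f). \<forall>y \<in> M (Dom C f). act f (x + y) = act f x + act f y) \<and>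
     (\<forall>f \<in> Mor C. \<forall>r. \<forall>x \<in> M (Dom C f). act f (sc r x) = sc r (act f x)) \<and>
     (\<forall>c \<in> Ob C. \<forall>x \<in> M c. act (Idm C c) x = x) \<and>
     (\<forall>f \<in> Mor C. \<forall>g \<in> Mor C. Cod C f = Dom C g \<longrightarrow>
        (\<forall>x \<in> M (Dom C f). act (Comp C g f) x = act g (act f x)))"

definition submodule :: "('o, 'm) cat \<Rightarrow> (complex \<Rightarrow> 'v::ab_group_add \<Rightarrow> 'v) \<Rightarrow> ('o \<Rightarrow> 'v set) \<Rightarrow> ('m \<Rightarrow> 'v \<Rightarrow> 'v) \<Rightarrow> ('o \<Rightarrow> 'v set) \<Rightarrow> bool" where
  "submodule C sc M act N \<longleftrightarrow>
     (\<forall>c \<in> Ob C. module.subspace sc (N c) \<and> N c \<subseteq> M c) \<and>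
     (\<forall>f \<in> Mor C. \<forall>x \<in> N (Dom C f). act f x \<in> N (Cod C f))"

definition fin_gen :: "('o, 'm) cat \<Rightarrow> (complex \<Rightarrow> 'v::ab_group_add \<Rightarrow> 'v) \<Rightarrow> ('o \<Rightarrow> 'v set) \<Rightarrow> ('m \<Rightarrow> 'v \<Rightarrow> 'v) \<Rightarrow> bool" where
  "fin_gen C sc M act \<longleftrightarrow>
     (\<exists>E. finite E \<and> E \<subseteq> Sigma (Ob C) M \<and>
        (\<forall>N. submodule C sc M act N \<and> (\<forall>(c, x) \<in> E. x \<in> N c) \<longrightarrow> (\<forall>c \<in> Ob C. N c = M c)))"

text \<open>We treat a module given by a presentation: at each object \<open>d\<close> the space is \<open>A d / R d\<close>
  (for an honest module \<open>R d = {}\<close>), with \<open>act\<close> the action.  The coinvariants at \<open>d\<close> are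
  \<open>A d / coinv_ker d\<close>, where \<open>coinv_ker d\<close> is the span of \<open>R d\<close> and all \<open>g\<cdot>a - a\<close>, \<open>g \<in> G_d\<close>.\<close>
definition coinv_ker :: "('o, 'm) cat \<Rightarrow> (complex \<Rightarrow> 'w::ab_group_add \<Rightarrow> 'w) \<Rightarrow> ('o \<Rightarrow> 'w set) \<Rightarrow> ('o \<Rightarrow> 'w set)
    \<Rightarrow> ('m \<Rightarrow> 'w \<Rightarrow> 'w) \<Rightarrow> 'o \<Rightarrow> 'w set" where
  "coinv_ker C sc A R act d =
     module.span sc (R d \<union> {act g a - a | g a. g \<in> Aut C d \<and> a \<in> A d})"

text \<open>The map of coinvariants \<open>A c / coinv_ker c \<rightarrow> A d / coinv_ker d\<close> induced by \<open>f : c \<rightarrow> d\<close>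
  is bijective (surjective and injective), written out on representatives.\<close>
definition coinv_iso :: "('o, 'm) cat \<Rightarrow> (complex \<Rightarrow> 'w::ab_group_add \<Rightarrow> 'w) \<Rightarrow> ('o \<Rightarrow> 'w set) \<Rightarrow> ('o \<Rightarrow> 'w set)
    \<Rightarrow> ('m \<Rightarrow> 'w \<Rightarrow> 'w) \<Rightarrow> 'o \<Rightarrow> 'o \<Rightarrow> 'm \<Rightarrow> bool" where
  "coinv_iso C sc A R act c d f \<longleftrightarrow>
     (\<forall>y \<in> A d. \<exists>x \<in> A c. y - act f x \<in> coinv_ker C sc A R act d) \<and>
     (\<forall>x \<in> A c. act f x \<in> coinv_ker C sc A R act d \<longrightarrow> x \<in> coinv_ker C sc A R act c)"

definition coinv_stabilize :: "('o, 'm) cat \<Rightarrow> (complex \<Rightarrow> 'w::ab_group_add \<Rightarrow> 'w) \<Rightarrow> ('o \<Rightarrow> 'w set) \<Rightarrow> ('o \<Rightarrow> 'w set)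
    \<Rightarrow> ('m \<Rightarrow> 'w \<Rightarrow> 'w) \<Rightarrow> bool" where
  "coinv_stabilize C sc A R act \<longleftrightarrow>
     (\<exists>X. X \<subseteq> Ob C \<and>
        (\<forall>c \<in> X. \<forall>d \<in> Ob C. cle C c d \<longrightarrow> d \<in> X) \<and>
        (\<forall>c \<in> Ob C. \<exists>x \<in> X. cle C c x) \<and>
        (\<forall>c \<in> X. \<forall>d \<in> Ob C. \<forall>f \<in> Hom C c d. coinv_iso C sc A R act c d f))"

definition is_rep :: "('o, 'm) cat \<Rightarrow> 'o \<Rightarrow> nat \<Rightarrow> ('m \<Rightarrow> nat \<Rightarrow> nat \<Rightarrow> complex) \<Rightarrow> bool" where
  "is_rep C c n \<rho> \<longleftrightarrow>
     (\<forall>i < n. \<forall>j < n. \<rho> (Idm C c) i j = (if i = j then 1 else 0)) \<and>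
     (\<forall>g \<in> Aut C c. \<forall>h \<in> Aut C c. \<forall>i < n. \<forall>j < n.
        \<rho> (Comp C g h) i j = (\<Sum>l < n. \<rho> g i l * \<rho> h l j))"

text \<open>Data of a free module \<open>F = \<Oplus>_{k<N} Ind_{cs k}(V_k)\<close>, \<open>V_k = \<complex>^{ns k}\<close> with action \<open>\<rho> k\<close>.\<close>
definition free_data :: "('o, 'm) cat \<Rightarrow> nat \<Rightarrow> (nat \<Rightarrow> 'o) \<Rightarrow> (nat \<Rightarrow> nat) \<Rightarrow> (nat \<Rightarrow> 'm \<Rightarrow> nat \<Rightarrow> nat \<Rightarrow> complex) \<Rightarrow> bool" where
  "free_data C N cs ns \<rho> \<longleftrightarrow> (\<forall>k < N. cs k \<in> Ob C \<and> is_rep C (cs k) (ns k) (\<rho> k))"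

definition fscale :: "(complex \<Rightarrow> 'v \<Rightarrow> 'v) \<Rightarrow> complex \<Rightarrow> ('a \<Rightarrow> 'v) \<Rightarrow> ('a \<Rightarrow> 'v)" where
  "fscale sc r \<phi> = (\<lambda>x. sc r (\<phi> x))"

definition single :: "'a \<Rightarrow> 'v::zero \<Rightarrow> ('a \<Rightarrow> 'v)" where
  "single a v = (\<lambda>x. if x = a then v else 0)"

text \<open>\<open>(F \<otimes> M)_d = \<Oplus>_k (\<complex>[Hom(c_k,d)] \<otimes>_{\<complex>[G_{c_k}]} \<complex>^{n_k}) \<otimes> M_d\<close> is presented as the quotient of
  \<open>tens_A d = \<Oplus>_k \<complex>[Hom(c_k,d)] \<otimes> \<complex>^{n_k} \<otimes> M_d\<close> (functions \<open>(k,f,i) \<mapsto> M_d\<close>, where \<open>\<phi>(k,f,i)\<close> is the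
  coefficient of \<open>f \<otimes> e_i\<close>) by the relations \<open>tens_R d\<close>: \<open>(f\<circ>g) \<otimes> e_j \<otimes> m = f \<otimes> \<rho>(g) e_j \<otimes> m\<close>.\<close>
definition tens_A :: "('o, 'm) cat \<Rightarrow> nat \<Rightarrow> (nat \<Rightarrow> 'o) \<Rightarrow> (nat \<Rightarrow> nat) \<Rightarrow> ('o \<Rightarrow> 'v::zero set)
    \<Rightarrow> 'o \<Rightarrow> (nat \<times> 'm \<times> nat \<Rightarrow> 'v) set" where
  "tens_A C N cs ns M d =
     {\<phi>. (\<forall>k f i. \<phi> (k, f, i) \<noteq> 0 \<longrightarrow> k < N \<and> f \<in> Hom C (cs k) d \<and> i < ns k) \<and>
         (\<forall>k < N. \<forall>f \<in> Hom C (cs k) d. \<forall>i < ns k. \<phi> (k, f, i) \<in> M d)}"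

definition tens_R :: "('o, 'm) cat \<Rightarrow> (complex \<Rightarrow> 'v::ab_group_add \<Rightarrow> 'v) \<Rightarrow> nat \<Rightarrow> (nat \<Rightarrow> 'o) \<Rightarrow> (nat \<Rightarrow> nat)
    \<Rightarrow> (nat \<Rightarrow> 'm \<Rightarrow> nat \<Rightarrow> nat \<Rightarrow> complex) \<Rightarrow> ('o \<Rightarrow> 'v set) \<Rightarrow> 'o \<Rightarrow> (nat \<times> 'm \<times> nat \<Rightarrow> 'v) set" where
  "tens_R C sc N cs ns \<rho> M d =
     {single (k, Comp C f g, j) m - (\<Sum>i < ns k. single (k, f, i) (sc (\<rho> k g i j) m)) | k f g j m.
        k < N \<and> f \<in> Hom C (cs k) d \<and> g \<in> Aut C (cs k) \<and> j < ns k \<and> m \<in> M d}"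

text \<open>Action of \<open>h : d \<rightarrow> d'\<close> on \<open>F \<otimes> M\<close>: \<open>f \<otimes> e_i \<otimes> m \<mapsto> (h \<circ> f) \<otimes> e_i \<otimes> h\<cdot>m\<close>.\<close>
definition tens_act :: "('o, 'm) cat \<Rightarrow> nat \<Rightarrow> (nat \<Rightarrow> 'o) \<Rightarrow> (nat \<Rightarrow> nat) \<Rightarrow> ('m \<Rightarrow> 'v::comm_monoid_add \<Rightarrow> 'v)
    \<Rightarrow> 'm \<Rightarrow> (nat \<times> 'm \<times> nat \<Rightarrow> 'v) \<Rightarrow> (nat \<times> 'm \<times> nat \<Rightarrow> 'v)" where
  "tens_act C N cs ns act h \<phi> =
     (\<lambda>(k, f', i). if k < N \<and> i < ns k
        then (\<Sum>f \<in> {f \<in> Hom C (cs k) (Dom C h). Comp C h f = f'}. act h (\<phi> (k, f, i)))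
        else 0)"

end

theory Submission
  imports Defs
begin

text \<open>
  Since \<open>Aut(d)\<close> acts transitively on \<open>Hom(c, d)\<close>, all morphisms \<open>c \<rightarrow> d\<close> induce the same map
  on coinvariants. So if a module is spanned by the orbits of a finite set \<open>G\<close> of elements,
  its coinvariants at \<open>d\<close> are spanned by one image of each generator lying below \<open>d\<close>, and
  they are determined by the space of linear relations among these images, a subspace of
  \<open>\<complex>^G\<close>. Going up along morphisms, first the set of generators below \<open>d\<close> and then the
  relation space can only grow; both are bounded, so above any object there is one beyond which
  they are constant, and there the maps of coinvariants are isomorphisms.

  For \<open>F \<otimes> M\<close> with \<open>F\<close> free a finite generating set comes from pullbacks and weak push-outs:
  \<open>f \<otimes> e\<^sub>i \<otimes> h\<cdot>x\<close> with \<open>f : c\<^sub>k \<rightarrow> d\<close> and \<open>h : z \<rightarrow> d\<close> is the image of the analogous element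
  on the weak push-out of the pullback of \<open>f\<close> and \<open>h\<close>, and up to isomorphism only finitely
  many pullback apexes occur.
\<close>

section \<open>Linear algebra\<close>

lemma sum_fun_apply: "(\<Sum>a\<in>A. f a) x = (\<Sum>a\<in>A. f a x)"
  by (induction A rule: infinite_finite_induct) auto

lemma single_add: "single t (x + y) = single t x + single t (y :: 'v :: monoid_add)"
  by (auto simp: single_def fun_eq_iff)

lemma single_zero: "single t 0 = 0"
  by (simp add: single_def fun_eq_iff)

lemma vector_space_fscale:
  fixes sc :: "complex \<Rightarrow> 'v::ab_group_add \<Rightarrow> 'v"
  assumes "vector_space sc"
  shows "vector_space (fscale sc)"
proof -
  interpret vector_space sc by (fact assms)
  show ?thesis
    by unfold_locales (auto simp: fscale_def fun_eq_iff scale_right_distrib scale_left_distrib)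
qed

definition linear_on :: "('a \<Rightarrow> 'v::plus \<Rightarrow> 'v) \<Rightarrow> 'v set \<Rightarrow> ('v \<Rightarrow> 'v) \<Rightarrow> bool" where
  "linear_on sc U h \<longleftrightarrow>
     (\<forall>x\<in>U. \<forall>y\<in>U. h (x + y) = h x + h y) \<and> (\<forall>r. \<forall>x\<in>U. h (sc r x) = sc r (h x))"

context vector_space
begin

lemma linear_on_zero:
  assumes "subspace U" "linear_on scale U h"
  shows "h 0 = 0"
proof -
  have "h (0 + 0) = h 0 + h 0"
    using assms(2) subspace_0[OF assms(1)] unfolding linear_on_def by blast
  then show ?thesis by simp
qed

lemma linear_on_diff:
  assumes "subspace U" "linear_on scale U h" "x \<in> U" "y \<in> U"
  shows "h (x - y) = h x - h y"
proof -
  have "h (x - y + y) = h (x - y) + h y"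
    using assms(2,4) subspace_diff[OF assms(1,3,4)] unfolding linear_on_def by blast
  then show ?thesis by (simp add: algebra_simps)
qed

lemma linear_on_sum:
  assumes "subspace U" "linear_on scale U h" "\<And>i. i \<in> I \<Longrightarrow> g i \<in> U"
  shows "h (sum g I) = (\<Sum>i\<in>I. h (g i))"
  using assms(3)
proof (induction I rule: infinite_finite_induct)
  case (insert i I)
  then have "h (g i + sum g I) = h (g i) + h (sum g I)"
    using assms(2) subspace_sum[OF assms(1), of I g] by (simp add: linear_on_def)
  with insert show ?case by simp
qed (use linear_on_zero[OF assms(1,2)] in simp_all)

lemma linear_on_span_subset:
  assumes "subspace U" "subspace T" "linear_on scale U h" "S \<subseteq> U" "\<And>x. x \<in> S \<Longrightarrow> h x \<in> T"
  shows "h ` span S \<subseteq> T"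
proof -
  have "subspace {x \<in> U. h x \<in> T}"
  proof (rule subspaceI)
    show "0 \<in> {x \<in> U. h x \<in> T}"
      using subspace_0[OF assms(1)] subspace_0[OF assms(2)] linear_on_zero[OF assms(1,3)] by simp
    show "x + y \<in> {x \<in> U. h x \<in> T}"
      if "x \<in> {x \<in> U. h x \<in> T}" "y \<in> {x \<in> U. h x \<in> T}" for x y
      using that assms(3) subspace_add[OF assms(1)] subspace_add[OF assms(2)]
      by (simp add: linear_on_def)
    show "c *s x \<in> {x \<in> U. h x \<in> T}" if "x \<in> {x \<in> U. h x \<in> T}" for c x
      using that assms(3) subspace_scale[OF assms(1)] subspace_scale[OF assms(2)]
      by (simp add: linear_on_def)
  qed
  then have "span S \<subseteq> {x \<in> U. h x \<in> T}"
    using assms(4,5) by (intro span_minimal) auto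
  then show ?thesis by blast
qed

lemma subspace_eq_if_dim_le:
  assumes "subspace S" "subspace T" "S \<subseteq> T" "T \<subseteq> span W" "finite W" "dim T \<le> dim S"
  shows "T = S"
proof (rule ccontr)
  assume "T \<noteq> S"
  then obtain t where t: "t \<in> T" "t \<notin> S"
    using assms(3) by blast
  obtain B where B: "B \<subseteq> S" "independent B" "S \<subseteq> span B" "card B = dim S"
    by (rule basis_exists)
  obtain BT where BT: "BT \<subseteq> T" "independent BT" "T \<subseteq> span BT" "card BT = dim T"
    by (rule basis_exists)
  have tB: "t \<notin> span B"
    using t span_minimal[OF B(1) assms(1)] by blast
  have "finite BT \<and> card BT \<le> card W"
    using independent_span_bound[OF assms(5) BT(2)] BT(1) assms(4) by blast
  then have "finite (insert t B) \<and> card (insert t B) \<le> card BT"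
    using BT(3) B(1) assms(3) t(1)
    by (intro independent_span_bound[OF _ independent_insertI[OF tB B(2)]]) blast+
  moreover have "t \<notin> B"
    using tB span_base by blast
  ultimately show False
    using B(4) BT(4) assms(6) by auto
qed

end

interpretation complex_mult: vector_space "(*) :: complex \<Rightarrow> complex \<Rightarrow> complex"
  by unfold_locales (simp_all add: algebra_simps)

interpretation coeff: vector_space "fscale ((*) :: complex \<Rightarrow> complex \<Rightarrow> complex)"
  by (rule vector_space_fscale) unfold_locales

section \<open>Categories of FI type\<close>

lemma Aut_in_Hom: "g \<in> Aut C d \<Longrightarrow> g \<in> Hom C d d"
  by (simp add: Aut_def)

definition weak_pushout :: "('o, 'm) cat \<Rightarrow> 'm \<Rightarrow> 'm \<Rightarrow> 'o \<times> 'm \<times> 'm \<Rightarrow> bool" where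
  "weak_pushout C f1 f2 = (\<lambda>(w, g1, g2).
     g1 \<in> Hom C (Cod C f1) w \<and> g2 \<in> Hom C (Cod C f2) w \<and>
     (\<forall>z h1 h2. h1 \<in> Hom C (Cod C f1) z \<longrightarrow> h2 \<in> Hom C (Cod C f2) z \<longrightarrow>
        pullback_square C f1 f2 h1 h2 \<longrightarrow> (\<exists>u\<in>Hom C w z. Comp C u g1 = h1 \<and> Comp C u g2 = h2)))"

locale FI_category =
  fixes C :: "('o, 'm) cat"
  assumes FI_type: "FI_type C"
begin

lemma category: "is_category C"
  using FI_type by (simp add: FI_type_def)

lemma Hom_memD:
  assumes "f \<in> Hom C c d"
  shows "f \<in> Mor C" "Dom C f = c" "Cod C f = d" "c \<in> Ob C" "d \<in> Ob C"
  using assms category by (auto simp: Hom_def is_category_def)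

lemma comp_in_Hom: "f \<in> Hom C a b \<Longrightarrow> g \<in> Hom C b c \<Longrightarrow> Comp C g f \<in> Hom C a c"
  using category by (auto simp: is_category_def Hom_def)

lemma comp_assoc:
  "f \<in> Hom C a b \<Longrightarrow> g \<in> Hom C b c \<Longrightarrow> h \<in> Hom C c d \<Longrightarrow>
   Comp C h (Comp C g f) = Comp C (Comp C h g) f"
  using category by (auto simp: is_category_def Hom_def)

lemma id_in_Hom: "c \<in> Ob C \<Longrightarrow> Idm C c \<in> Hom C c c"
  using category by (auto simp: is_category_def)

lemma comp_id_left: "f \<in> Hom C a b \<Longrightarrow> Comp C (Idm C b) f = f"
  using category by (auto simp: is_category_def Hom_def)

lemma cle_refl: "c \<in> Ob C \<Longrightarrow> cle C c c"
  using id_in_Hom by (auto simp: cle_def)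

lemma cle_trans: "cle C a b \<Longrightarrow> cle C b c \<Longrightarrow> cle C a c"
  using comp_in_Hom by (fastforce simp: cle_def)

lemma finite_Hom: "c \<in> Ob C \<Longrightarrow> d \<in> Ob C \<Longrightarrow> finite (Hom C c d)"
  using FI_type by (simp add: FI_type_def)

lemma mono_cancel:
  assumes "g \<in> Hom C a b" "h \<in> Hom C a b" "f \<in> Hom C b c" "Comp C f g = Comp C f h"
  shows "g = h"
proof -
  have "\<forall>f\<in>Mor C. \<forall>g\<in>Mor C. \<forall>h\<in>Mor C. Cod C g = Dom C f \<and> Cod C h = Dom C f \<and>
          Dom C g = Dom C h \<and> Comp C f g = Comp C f h \<longrightarrow> g = h"
    using FI_type by (simp add: FI_type_def)
  with assms show ?thesis by (auto simp: Hom_def)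
qed

lemma Aut_transitive:
  assumes "f \<in> Hom C c d" "f' \<in> Hom C c d"
  shows "\<exists>g\<in>Aut C d. Comp C g f = f'"
proof -
  have "\<forall>c\<in>Ob C. \<forall>d\<in>Ob C. \<forall>f\<in>Hom C c d. \<forall>f'\<in>Hom C c d. \<exists>g\<in>Aut C d. Comp C g f = f'"
    using FI_type by (simp add: FI_type_def)
  with assms Hom_memD(4,5)[OF assms(1)] show ?thesis by blast
qed

lemma finite_iso_classes_below:
  "d \<in> Ob C \<Longrightarrow> \<exists>S. finite S \<and> S \<subseteq> Ob C \<and> (\<forall>c\<in>Ob C. cle C c d \<longrightarrow> (\<exists>s\<in>S. iso_obj C c s))"
  using FI_type by (simp add: FI_type_def)

lemma pullback_exists:
  assumes "f1 \<in> Hom C c1 d" "f2 \<in> Hom C c2 d"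
  shows "\<exists>p p1 p2. p1 \<in> Hom C p c1 \<and> p2 \<in> Hom C p c2 \<and> pullback_square C p1 p2 f1 f2"
proof -
  have "\<forall>c1\<in>Ob C. \<forall>c2\<in>Ob C. \<forall>d\<in>Ob C. \<forall>f1\<in>Hom C c1 d. \<forall>f2\<in>Hom C c2 d.
          \<exists>p\<in>Ob C. \<exists>p1\<in>Hom C p c1. \<exists>p2\<in>Hom C p c2. pullback_square C p1 p2 f1 f2"
    using FI_type by (simp add: FI_type_def)
  with assms Hom_memD(4,5)[OF assms(1)] Hom_memD(4)[OF assms(2)] show ?thesis by blast
qed

lemma weak_pushout_exists:
  assumes "f1 \<in> Hom C p c1" "f2 \<in> Hom C p c2"
  shows "\<exists>w. weak_pushout C f1 f2 w"
proof -
  have "\<forall>p\<in>Ob C. \<forall>c1\<in>Ob C. \<forall>c2\<in>Ob C. \<forall>f1\<in>Hom C p c1. \<forall>f2\<in>Hom C p c2.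
          \<exists>d\<in>Ob C. \<exists>g1\<in>Hom C c1 d. \<exists>g2\<in>Hom C c2 d. pullback_square C f1 f2 g1 g2 \<and>
            (\<forall>z\<in>Ob C. \<forall>h1\<in>Hom C c1 z. \<forall>h2\<in>Hom C c2 z. pullback_square C f1 f2 h1 h2 \<longrightarrow>
               (\<exists>!h. h \<in> Hom C d z \<and> Comp C h g1 = h1 \<and> Comp C h g2 = h2))"
    using FI_type by (simp add: FI_type_def)
  then obtain d g1 g2 where g: "g1 \<in> Hom C c1 d" "g2 \<in> Hom C c2 d"
    and univ: "\<And>z h1 h2. z \<in> Ob C \<Longrightarrow> h1 \<in> Hom C c1 z \<Longrightarrow> h2 \<in> Hom C c2 z \<Longrightarrow>
      pullback_square C f1 f2 h1 h2 \<Longrightarrow> \<exists>h. h \<in> Hom C d z \<and> Comp C h g1 = h1 \<and> Comp C h g2 = h2"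
    using assms Hom_memD(4,5)[OF assms(1)] Hom_memD(5)[OF assms(2)] by (metis (full_types))
  have "weak_pushout C f1 f2 (d, g1, g2)"
    using g univ Hom_memD(3)[OF assms(1)] Hom_memD(3)[OF assms(2)] Hom_memD(5)
    unfolding weak_pushout_def by (simp add: Bex_def)
  then show ?thesis ..
qed

lemma exists_above_maximizing:
  fixes \<mu> :: "'o \<Rightarrow> nat"
  assumes "c \<in> Ob C" "\<And>d. \<mu> d \<le> B"
  obtains d where "d \<in> Ob C" "cle C c d" "\<And>w. w \<in> Ob C \<Longrightarrow> cle C d w \<Longrightarrow> \<mu> w \<le> \<mu> d"
proof -
  obtain d where d: "d \<in> Ob C" "cle C c d"
    and max: "\<And>w. w \<in> Ob C \<and> cle C c w \<Longrightarrow> \<mu> w \<le> \<mu> d"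
    using ex_has_greatest_nat[of "\<lambda>d. d \<in> Ob C \<and> cle C c d" c \<mu> "Suc B"] assms cle_refl
    by (metis le_imp_less_Suc)
  show thesis
    using that[OF d] max cle_trans[OF d(2)] by blast
qed

lemma pullback_square_comp_iso:
  assumes pb: "pullback_square C p1 p2 f h"
    and p1: "p1 \<in> Hom C p c1" and p2: "p2 \<in> Hom C p c2"
    and f: "f \<in> Hom C c1 d" and h: "h \<in> Hom C c2 d"
    and a: "a \<in> Hom C p s" and b: "b \<in> Hom C s p"
    and ba: "Comp C b a = Idm C p" and ab: "Comp C a b = Idm C s"
  shows "pullback_square C (Comp C p1 b) (Comp C p2 b) f h"
proof -
  have "Comp C f (Comp C p1 b) = Comp C (Comp C f p1) b"
    using comp_assoc[OF b p1 f] .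
  also have "\<dots> = Comp C (Comp C h p2) b"
    using pb by (simp add: pullback_square_def)
  also have "\<dots> = Comp C h (Comp C p2 b)"
    using comp_assoc[OF b p2 h] by simp
  finally have comm: "Comp C f (Comp C p1 b) = Comp C h (Comp C p2 b)" .
  have univ: "\<exists>!u. u \<in> Hom C q s \<and> Comp C (Comp C p1 b) u = r1 \<and> Comp C (Comp C p2 b) u = r2"
    if q: "q \<in> Ob C" and r1: "r1 \<in> Hom C q c1" and r2: "r2 \<in> Hom C q c2"
      and e: "Comp C f r1 = Comp C h r2" for q r1 r2
  proof -
    have "\<exists>!u. u \<in> Hom C q p \<and> Comp C p1 u = r1 \<and> Comp C p2 u = r2"
      using pb q r1 r2 e Hom_memD(2,3)[OF p1] Hom_memD(3)[OF p2]
      unfolding pullback_square_def by blast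
    then obtain u0 where u0: "u0 \<in> Hom C q p" "Comp C p1 u0 = r1" "Comp C p2 u0 = r2"
      and uniq: "\<And>u. u \<in> Hom C q p \<Longrightarrow> Comp C p1 u = r1 \<Longrightarrow> Comp C p2 u = r2 \<Longrightarrow> u = u0"
      by blast
    have b_cancel: "Comp C pi (Comp C b (Comp C a u)) = Comp C pi u"
      if "u \<in> Hom C q p" "pi \<in> Hom C p ci" for u pi ci
      using comp_assoc[OF that(1) a b] ba comp_id_left[OF that(1)] by simp
    show ?thesis
    proof (rule ex1I[of _ "Comp C a u0"])
      show "Comp C a u0 \<in> Hom C q s \<and> Comp C (Comp C p1 b) (Comp C a u0) = r1 \<and>
            Comp C (Comp C p2 b) (Comp C a u0) = r2"
        using comp_in_Hom[OF u0(1) a] comp_assoc[OF comp_in_Hom[OF u0(1) a] b] p1 p2 u0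
          b_cancel[OF u0(1) p1] b_cancel[OF u0(1) p2] by simp
    next
      fix u assume u: "u \<in> Hom C q s \<and> Comp C (Comp C p1 b) u = r1 \<and> Comp C (Comp C p2 b) u = r2"
      have bu: "Comp C b u \<in> Hom C q p"
        using comp_in_Hom[OF _ b] u by blast
      have "Comp C b u = u0"
        using uniq[OF bu] comp_assoc[OF _ b p1, of u q] comp_assoc[OF _ b p2, of u q] u by simp
      then show "u = Comp C a u0"
        using comp_assoc[OF _ b a, of u q] u ab comp_id_left[of u q s] by simp
    qed
  qed
  show ?thesis
    unfolding pullback_square_def
    using comm univ Hom_memD[OF comp_in_Hom[OF b p1]] Hom_memD[OF comp_in_Hom[OF b p2]] by simp
qed

lemma pullback_with_apex_in:
  assumes "finite D" "D \<subseteq> Ob C"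
  obtains S where "finite S" "S \<subseteq> Ob C"
    "\<And>c1 c2 d f1 f2. c1 \<in> D \<Longrightarrow> f1 \<in> Hom C c1 d \<Longrightarrow> f2 \<in> Hom C c2 d \<Longrightarrow>
       \<exists>s\<in>S. \<exists>q1\<in>Hom C s c1. \<exists>q2\<in>Hom C s c2. pullback_square C q1 q2 f1 f2"
proof -
  have "\<forall>c\<in>D. \<exists>S. finite S \<and> S \<subseteq> Ob C \<and> (\<forall>p\<in>Ob C. cle C p c \<longrightarrow> (\<exists>s\<in>S. iso_obj C p s))"
    using assms(2) finite_iso_classes_below by blast
  then obtain reps where reps: "\<And>c. c \<in> D \<Longrightarrow>
      finite (reps c) \<and> reps c \<subseteq> Ob C \<and> (\<forall>p\<in>Ob C. cle C p c \<longrightarrow> (\<exists>s\<in>reps c. iso_obj C p s))"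
    by metis
  show thesis
  proof (rule that[of "\<Union>(reps ` D)"])
    show "finite (\<Union>(reps ` D))" "\<Union>(reps ` D) \<subseteq> Ob C"
      using assms(1) reps by auto
    fix c1 c2 d f1 f2 assume c1: "c1 \<in> D" and f1: "f1 \<in> Hom C c1 d" and f2: "f2 \<in> Hom C c2 d"
    obtain p p1 p2 where p1: "p1 \<in> Hom C p c1" and p2: "p2 \<in> Hom C p c2"
      and pb: "pullback_square C p1 p2 f1 f2"
      using pullback_exists[OF f1 f2] by blast
    obtain s where s: "s \<in> reps c1" and "iso_obj C p s"
      using reps[OF c1] Hom_memD(4)[OF p1] p1 by (auto simp: cle_def)
    then obtain a b where "a \<in> Hom C p s" "b \<in> Hom C s p" "Comp C b a = Idm C p" "Comp C a b = Idm C s"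
      unfolding iso_obj_def by blast
    then show "\<exists>s\<in>\<Union>(reps ` D). \<exists>q1\<in>Hom C s c1. \<exists>q2\<in>Hom C s c2. pullback_square C q1 q2 f1 f2"
      using pullback_square_comp_iso[OF pb p1 p2 f1 f2] comp_in_Hom[OF _ p1] comp_in_Hom[OF _ p2] s c1
      by blast
  qed
qed

end

section \<open>Stabilization of coinvariants of finitely generated modules\<close>

locale fg_presented_module = FI_category C + vector_space scale
  for C :: "('o, 'm) cat" and scale :: "complex \<Rightarrow> 'w::ab_group_add \<Rightarrow> 'w" +
  fixes A R :: "'o \<Rightarrow> 'w set" and act :: "'m \<Rightarrow> 'w \<Rightarrow> 'w" and G :: "('o \<times> 'w) set"
  assumes A_subspace: "c \<in> Ob C \<Longrightarrow> subspace (A c)"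
    and R_subset_A: "c \<in> Ob C \<Longrightarrow> R c \<subseteq> A c"
    and act_A: "f \<in> Hom C c d \<Longrightarrow> x \<in> A c \<Longrightarrow> act f x \<in> A d"
    and act_linear: "f \<in> Hom C c d \<Longrightarrow> linear_on scale (A c) (act f)"
    and act_R: "f \<in> Hom C c d \<Longrightarrow> x \<in> R c \<Longrightarrow> act f x \<in> span (R d)"
    and act_comp: "f \<in> Hom C a b \<Longrightarrow> g \<in> Hom C b c \<Longrightarrow> x \<in> A a \<Longrightarrow>
      act (Comp C g f) x = act g (act f x)"
    and finite_G: "finite G"
    and G_A: "(z, x) \<in> G \<Longrightarrow> z \<in> Ob C \<and> x \<in> A z"
    and A_spanned: "d \<in> Ob C \<Longrightarrow> A d \<subseteq> span {act u x | u x z. (z, x) \<in> G \<and> u \<in> Hom C z d}"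
begin

lemma act_scale: "f \<in> Hom C c d \<Longrightarrow> x \<in> A c \<Longrightarrow> act f (scale r x) = scale r (act f x)"
  using act_linear by (simp add: linear_on_def)

lemma act_diff: "f \<in> Hom C c d \<Longrightarrow> x \<in> A c \<Longrightarrow> y \<in> A c \<Longrightarrow> act f (x - y) = act f x - act f y"
  using linear_on_diff[OF A_subspace act_linear] Hom_memD(4) by blast

abbreviation ker :: "'o \<Rightarrow> 'w set" where
  "ker \<equiv> coinv_ker C scale A R act"

lemma ker_subspace: "subspace (ker d)"
  by (simp add: coinv_ker_def)

lemma coinv_ker_gens_subset_A:
  assumes d: "d \<in> Ob C"
  shows "R d \<union> {act g a - a | g a. g \<in> Aut C d \<and> a \<in> A d} \<subseteq> A d"
proof -
  have "act g a - a \<in> A d" if "g \<in> Aut C d" "a \<in> A d" for g a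
    using subspace_diff[OF A_subspace[OF d] act_A[OF Aut_in_Hom[OF that(1)] that(2)] that(2)] .
  then show ?thesis
    using R_subset_A[OF d] by blast
qed

lemma span_R_subset_ker: "span (R d) \<subseteq> ker d"
  unfolding coinv_ker_def by (rule span_mono) blast

lemma Aut_act_diff_in_ker: "g \<in> Aut C d \<Longrightarrow> a \<in> A d \<Longrightarrow> act g a - a \<in> ker d"
  unfolding coinv_ker_def by (rule span_base) blast

lemma parallel_act_diff_in_ker:
  assumes f: "f \<in> Hom C c d" and f': "f' \<in> Hom C c d" and x: "x \<in> A c"
  shows "act f' x - act f x \<in> ker d"
proof -
  obtain g where g: "g \<in> Aut C d" "Comp C g f = f'"
    using Aut_transitive[OF f f'] by blast
  then have "act f' x = act g (act f x)"
    using act_comp[OF f Aut_in_Hom[OF g(1)] x] by simp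
  then show ?thesis
    using Aut_act_diff_in_ker[OF g(1) act_A[OF f x]] by simp
qed

lemma act_ker:
  assumes f: "f \<in> Hom C c d" and x: "x \<in> ker c"
  shows "act f x \<in> ker d"
proof -
  have c: "c \<in> Ob C" using Hom_memD[OF f] by simp
  have gens: "act f y \<in> ker d" if y: "y \<in> R c \<union> {act g a - a | g a. g \<in> Aut C c \<and> a \<in> A c}" for y
  proof (cases "y \<in> R c")
    case True
    then show ?thesis
      using act_R[OF f True] span_R_subset_ker by blast
  next
    case False
    then obtain g a where y: "y = act g a - a" and g: "g \<in> Aut C c" and a: "a \<in> A c"
      using y by blast
    have gc: "g \<in> Hom C c c" using Aut_in_Hom[OF g] .
    have "act f y = act (Comp C f g) a - act f a"
      using y act_diff[OF f act_A[OF gc a] a] act_comp[OF gc f a] by simp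
    then show ?thesis
      using parallel_act_diff_in_ker[OF f comp_in_Hom[OF gc f] a] by simp
  qed
  have "act f ` ker c \<subseteq> ker d"
    unfolding coinv_ker_def[of C scale A R act c]
    using linear_on_span_subset[OF A_subspace[OF c] ker_subspace act_linear[OF f]
        coinv_ker_gens_subset_A[OF c] gens] .
  with x show ?thesis by blast
qed

definition gens_below :: "'o \<Rightarrow> ('o \<times> 'w) set" where
  "gens_below d = {p \<in> G. cle C (fst p) d}"

text \<open>Any morphism gives the same class modulo \<open>ker d\<close> (\<open>parallel_act_diff_in_ker\<close>).\<close>
definition transport :: "'o \<Rightarrow> 'o \<times> 'w \<Rightarrow> 'w" where
  "transport d p = act (SOME u. u \<in> Hom C (fst p) d) (snd p)"

definition comb :: "'o \<Rightarrow> ('o \<times> 'w \<Rightarrow> complex) \<Rightarrow> 'w" where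
  "comb d a = (\<Sum>p\<in>gens_below d. scale (a p) (transport d p))"

definition coeffs :: "('o \<times> 'w \<Rightarrow> complex) set" where
  "coeffs = {a. \<forall>p. p \<notin> G \<longrightarrow> a p = 0}"

definition relations :: "'o \<Rightarrow> ('o \<times> 'w \<Rightarrow> complex) set" where
  "relations d = {a \<in> coeffs. comb d a \<in> ker d}"

lemma finite_gens_below: "finite (gens_below d)"
  using finite_G by (simp add: gens_below_def)

lemma card_gens_below_le: "card (gens_below d) \<le> card G"
  by (rule card_mono[OF finite_G]) (auto simp: gens_below_def)

lemma gens_below_mono: "f \<in> Hom C d w \<Longrightarrow> gens_below d \<subseteq> gens_below w"
  unfolding gens_below_def using cle_trans by (auto simp: cle_def)

lemma transport_morphism: "p \<in> gens_below d \<Longrightarrow> (SOME u. u \<in> Hom C (fst p) d) \<in> Hom C (fst p) d"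
  by (rule someI_ex) (auto simp: gens_below_def cle_def)

lemma gen_in_A: "p \<in> G \<Longrightarrow> snd p \<in> A (fst p)"
  using G_A by (cases p) simp

lemma transport_in_A: "p \<in> gens_below d \<Longrightarrow> transport d p \<in> A d"
  unfolding transport_def
  using act_A[OF transport_morphism gen_in_A] by (simp add: gens_below_def)

lemma act_gen_diff_transport_in_ker:
  assumes "p \<in> gens_below d" "u \<in> Hom C (fst p) d"
  shows "act u (snd p) - transport d p \<in> ker d"
  unfolding transport_def
  using parallel_act_diff_in_ker[OF transport_morphism[OF assms(1)] assms(2)] assms(1)
    gen_in_A by (simp add: gens_below_def)

lemma comb_in_A: "d \<in> Ob C \<Longrightarrow> comb d a \<in> A d"
  unfolding comb_def
  by (intro subspace_sum subspace_scale A_subspace transport_in_A)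

lemma comb_zero: "comb d 0 = 0"
  by (simp add: comb_def)

lemma comb_add: "comb d (a + b) = comb d a + comb d b"
  by (simp add: comb_def scale_left_distrib sum.distrib)

lemma comb_fscale: "comb d (fscale (*) r a) = scale r (comb d a)"
  by (simp add: comb_def fscale_def scale_sum_right)

lemma comb_single:
  assumes "p \<in> gens_below d"
  shows "comb d (single p 1) = transport d p"
proof -
  have "comb d (single p 1) = (\<Sum>q\<in>gens_below d. if q = p then transport d p else 0)"
    unfolding comb_def by (rule sum.cong) (auto simp: single_def)
  also have "\<dots> = transport d p"
    using finite_gens_below assms by simp
  finally show ?thesis .
qed

lemma coeffs_subspace: "coeff.subspace coeffs"
  by (auto simp: coeff.subspace_def coeffs_def fscale_def)

lemma relations_subspace: "coeff.subspace (relations d)"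
  using coeffs_subspace ker_subspace
  by (auto simp: coeff.subspace_def subspace_def relations_def comb_add comb_fscale comb_zero)

lemma relations_subset_span: "relations d \<subseteq> coeff.span ((\<lambda>p. single p 1) ` G)"
proof
  fix a assume "a \<in> relations d"
  then have a: "a \<in> coeffs" by (simp add: relations_def)
  have "a = (\<Sum>p\<in>G. fscale (*) (a p) (single p 1))"
  proof
    fix q
    have "(\<Sum>p\<in>G. fscale (*) (a p) (single p 1)) q = (\<Sum>p\<in>G. if q = p then a p else 0)"
      unfolding sum_fun_apply by (rule sum.cong) (auto simp: fscale_def single_def)
    also have "\<dots> = a q"
      using finite_G a by (cases q) (auto simp: coeffs_def)
    finally show "a q = (\<Sum>p\<in>G. fscale (*) (a p) (single p 1)) q" by simp
  qed
  also have "\<dots> \<in> coeff.span ((\<lambda>p. single p 1) ` G)"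
    by (intro coeff.span_sum coeff.span_scale coeff.span_base) auto
  finally show "a \<in> coeff.span ((\<lambda>p. single p 1) ` G)" .
qed

lemma dim_relations_le: "coeff.dim (relations d) \<le> card G"
  using coeff.dim_le_card[OF relations_subset_span] card_image_le[OF finite_G] finite_G
  by (meson finite_imageI le_trans)

lemma act_comb_diff_in_ker:
  assumes f: "f \<in> Hom C d w" and gens: "gens_below w = gens_below d"
  shows "act f (comb d a) - comb w a \<in> ker w"
proof -
  have d: "d \<in> Ob C" using Hom_memD[OF f] by simp
  have "act f (comb d a) = (\<Sum>p\<in>gens_below d. act f (scale (a p) (transport d p)))"
    unfolding comb_def
    by (rule linear_on_sum[OF A_subspace[OF d] act_linear[OF f]])
      (intro subspace_scale[OF A_subspace[OF d]] transport_in_A)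
  also have "\<dots> = (\<Sum>p\<in>gens_below d. scale (a p) (act f (transport d p)))"
    by (intro sum.cong refl act_scale[OF f] transport_in_A)
  finally have "act f (comb d a) - comb w a =
      (\<Sum>p\<in>gens_below d. scale (a p) (act f (transport d p) - transport w p))"
    by (simp add: comb_def gens sum_subtractf scale_right_diff_distrib)
  moreover have "act f (transport d p) - transport w p \<in> ker w" if p: "p \<in> gens_below d" for p
  proof -
    define u where "u = (SOME u. u \<in> Hom C (fst p) d)"
    have u: "u \<in> Hom C (fst p) d"
      unfolding u_def using transport_morphism[OF p] .
    have "act f (transport d p) = act (Comp C f u) (snd p)"
      unfolding transport_def u_def[symmetric]
      using act_comp[OF u f gen_in_A] p by (simp add: gens_below_def)
    then show ?thesis
      using act_gen_diff_transport_in_ker[of p w "Comp C f u"] comp_in_Hom[OF u f] p gens by simp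
  qed
  ultimately show ?thesis
    by (simp add: subspace_sum subspace_scale ker_subspace)
qed

lemma relations_mono:
  assumes f: "f \<in> Hom C d w" and gens: "gens_below w = gens_below d"
  shows "relations d \<subseteq> relations w"
proof
  fix a assume a: "a \<in> relations d"
  then have "act f (comb d a) \<in> ker w"
    using act_ker[OF f] by (simp add: relations_def)
  from subspace_diff[OF ker_subspace this act_comb_diff_in_ker[OF f gens]]
  have "act f (comb d a) - (act f (comb d a) - comb w a) \<in> ker w" .
  then show "a \<in> relations w"
    using a by (simp add: relations_def)
qed

lemma comb_classes_subspace:
  assumes d: "d \<in> Ob C"
  shows "subspace {x \<in> A d. \<exists>a\<in>coeffs. x - comb d a \<in> ker d}" (is "subspace ?T")
proof (rule subspaceI)
  have "0 - comb d 0 \<in> ker d"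
    using subspace_0[OF ker_subspace] by (simp add: comb_zero)
  then show "0 \<in> ?T"
    using subspace_0[OF A_subspace[OF d]] coeff.subspace_0[OF coeffs_subspace] by blast
next
  fix x y assume "x \<in> ?T" "y \<in> ?T"
  then obtain a b where x: "x \<in> A d" "a \<in> coeffs" "x - comb d a \<in> ker d"
    and y: "y \<in> A d" "b \<in> coeffs" "y - comb d b \<in> ker d"
    by blast
  have "x + y - comb d (a + b) \<in> ker d"
    using subspace_add[OF ker_subspace x(3) y(3)] by (simp add: comb_add algebra_simps)
  moreover have "x + y \<in> A d" "a + b \<in> coeffs"
    using subspace_add[OF A_subspace[OF d] x(1) y(1)]
      coeff.subspace_add[OF coeffs_subspace x(2) y(2)] .
  ultimately show "x + y \<in> ?T"
    by blast
next
  fix r x assume "x \<in> ?T"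
  then obtain a where x: "x \<in> A d" "a \<in> coeffs" "x - comb d a \<in> ker d"
    by blast
  have "scale r x - comb d (fscale (*) r a) \<in> ker d"
    using subspace_scale[OF ker_subspace x(3), of r]
    by (simp add: comb_fscale scale_right_diff_distrib)
  moreover have "scale r x \<in> A d" "fscale (*) r a \<in> coeffs"
    using subspace_scale[OF A_subspace[OF d] x(1)]
      coeff.subspace_scale[OF coeffs_subspace x(2)] .
  ultimately show "scale r x \<in> ?T"
    by blast
qed

lemma comb_surjective:
  assumes d: "d \<in> Ob C" and x: "x \<in> A d"
  shows "\<exists>a\<in>coeffs. x - comb d a \<in> ker d"
proof -
  define T where "T = {x \<in> A d. \<exists>a\<in>coeffs. x - comb d a \<in> ker d}"
  have "act u x \<in> T" if "(z, x) \<in> G" "u \<in> Hom C z d" for u x z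
  proof -
    have p: "(z, x) \<in> gens_below d"
      using that by (auto simp: gens_below_def cle_def)
    have "single (z, x) 1 \<in> coeffs"
      using that(1) by (simp add: coeffs_def single_def)
    moreover have "act u x - comb d (single (z, x) 1) \<in> ker d"
      using act_gen_diff_transport_in_ker[OF p] that(2) comb_single[OF p] by simp
    ultimately show ?thesis
      using act_A[OF that(2)] G_A[OF that(1)] unfolding T_def by blast
  qed
  then have "span {act u x | u x z. (z, x) \<in> G \<and> u \<in> Hom C z d} \<subseteq> T"
    unfolding T_def by (intro span_minimal[OF _ comb_classes_subspace[OF d]]) blast
  then have "A d \<subseteq> T"
    using A_spanned[OF d] by blast
  with x show ?thesis
    unfolding T_def by blast
qed

lemma coinv_iso_if_stable:
  assumes d: "d \<in> Ob C" and f: "f \<in> Hom C d w"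
    and gens: "gens_below w = gens_below d" and rels: "relations w = relations d"
  shows "coinv_iso C scale A R act d w f"
proof -
  have w: "w \<in> Ob C" using Hom_memD[OF f] by simp
  have comb: "act f (comb d a) - comb w a \<in> ker w" for a
    using act_comb_diff_in_ker[OF f gens] .
  have "\<exists>x\<in>A d. y - act f x \<in> ker w" if y: "y \<in> A w" for y
  proof -
    obtain a where "y - comb w a \<in> ker w"
      using comb_surjective[OF w y] by blast
    from subspace_diff[OF ker_subspace this comb[of a]]
    have "y - act f (comb d a) \<in> ker w"
      by simp
    then show ?thesis
      using comb_in_A[OF d] by blast
  qed
  moreover have "x \<in> ker d" if x: "x \<in> A d" and fx: "act f x \<in> ker w" for x
  proof -
    obtain a where a: "a \<in> coeffs" and xa: "x - comb d a \<in> ker d"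
      using comb_surjective[OF d x] by blast
    have "act f x - act f (comb d a) \<in> ker w"
      using act_ker[OF f xa] act_diff[OF f x comb_in_A[OF d]] by simp
    from subspace_diff[OF ker_subspace subspace_diff[OF ker_subspace fx this] comb[of a]]
    have "comb w a \<in> ker w"
      by simp
    then have "a \<in> relations w"
      using a by (simp add: relations_def)
    then have "a \<in> relations d"
      using rels by simp
    then have "comb d a \<in> ker d"
      by (simp add: relations_def)
    from subspace_add[OF ker_subspace xa this] show ?thesis
      by simp
  qed
  ultimately show ?thesis
    by (simp add: coinv_iso_def)
qed

lemma stable_above:
  assumes c: "c \<in> Ob C"
  obtains d where "d \<in> Ob C" "cle C c d"
    "\<And>w. w \<in> Ob C \<Longrightarrow> cle C d w \<Longrightarrow> gens_below w = gens_below d \<and> relations w = relations d"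
proof -
  obtain d0 where d0: "d0 \<in> Ob C" "cle C c d0"
    and max0: "\<And>w. w \<in> Ob C \<Longrightarrow> cle C d0 w \<Longrightarrow> card (gens_below w) \<le> card (gens_below d0)"
    by (rule exists_above_maximizing[where \<mu>="\<lambda>d. card (gens_below d)", OF c card_gens_below_le]) blast
  obtain d where d: "d \<in> Ob C" "cle C d0 d"
    and max: "\<And>w. w \<in> Ob C \<Longrightarrow> cle C d w \<Longrightarrow> coeff.dim (relations w) \<le> coeff.dim (relations d)"
    by (rule exists_above_maximizing[where \<mu>="\<lambda>d. coeff.dim (relations d)", OF d0(1) dim_relations_le]) blast
  have "gens_below w = gens_below d \<and> relations w = relations d" if w: "w \<in> Ob C" "cle C d w" for w
  proof -
    obtain f0 where f0: "f0 \<in> Hom C d0 d" using d(2) by (auto simp: cle_def)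
    obtain f where f: "f \<in> Hom C d w" using w(2) by (auto simp: cle_def)
    have sub0: "gens_below d0 \<subseteq> gens_below d" and sub: "gens_below d \<subseteq> gens_below w"
      using gens_below_mono[OF f0] gens_below_mono[OF f] .
    have "gens_below d0 = gens_below w"
      using card_seteq[OF finite_gens_below order_trans[OF sub0 sub]
          max0[OF w(1) cle_trans[OF d(2) w(2)]]] .
    with sub0 sub have gens: "gens_below w = gens_below d"
      by blast
    have "relations w = relations d"
      using coeff.subspace_eq_if_dim_le[OF relations_subspace relations_subspace
          relations_mono[OF f gens] relations_subset_span finite_imageI[OF finite_G] max[OF w]] .
    with gens show ?thesis ..
  qed
  with d d0 show thesis
    using that cle_trans by metis
qed

lemma coinv_stabilizes: "coinv_stabilize C scale A R act"
proof -
  define X where "X = {d \<in> Ob C. \<forall>w\<in>Ob C. cle C d w \<longrightarrow>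
    gens_below w = gens_below d \<and> relations w = relations d}"
  have stable: "gens_below w = gens_below c \<and> relations w = relations c"
    if "c \<in> X" "w \<in> Ob C" "cle C c w" for c w
    using that by (simp add: X_def)
  have "\<forall>c\<in>X. \<forall>d\<in>Ob C. cle C c d \<longrightarrow> d \<in> X"
  proof (intro ballI impI)
    fix c d assume c: "c \<in> X" and d: "d \<in> Ob C" and cd: "cle C c d"
    have "gens_below w = gens_below d \<and> relations w = relations d"
      if "w \<in> Ob C" "cle C d w" for w
      using stable[OF c d cd] stable[OF c that(1) cle_trans[OF cd that(2)]] by simp
    with d show "d \<in> X"
      by (simp add: X_def)
  qed
  moreover have "\<forall>c\<in>Ob C. \<exists>d\<in>X. cle C c d"
  proof
    fix c assume "c \<in> Ob C"
    then obtain d where "d \<in> Ob C" "cle C c d"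
      "\<And>w. w \<in> Ob C \<Longrightarrow> cle C d w \<Longrightarrow> gens_below w = gens_below d \<and> relations w = relations d"
      using stable_above by blast
    then show "\<exists>d\<in>X. cle C c d"
      unfolding X_def by blast
  qed
  moreover have "\<forall>c\<in>X. \<forall>d\<in>Ob C. \<forall>f\<in>Hom C c d. coinv_iso C scale A R act c d f"
  proof (intro ballI)
    fix c d f assume c: "c \<in> X" and d: "d \<in> Ob C" and f: "f \<in> Hom C c d"
    have "cle C c d"
      using f by (auto simp: cle_def)
    with stable[OF c d] show "coinv_iso C scale A R act c d f"
      using coinv_iso_if_stable[OF Hom_memD(4)[OF f] f] by simp
  qed
  moreover have "X \<subseteq> Ob C"
    by (auto simp: X_def)
  ultimately show ?thesis
    unfolding coinv_stabilize_def by blast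
qed

end

section \<open>\<open>C\<close>-modules and their tensor products with free modules\<close>

locale FI_module = FI_category C + vector_space sc
  for C :: "('o, 'm) cat" and sc :: "complex \<Rightarrow> 'v::ab_group_add \<Rightarrow> 'v" +
  fixes M :: "'o \<Rightarrow> 'v set" and act :: "'m \<Rightarrow> 'v \<Rightarrow> 'v"
  assumes C_module: "C_module C sc M act"
begin

lemma M_subspace: "c \<in> Ob C \<Longrightarrow> subspace (M c)"
  using C_module by (simp add: C_module_def)

lemma act_M:
  assumes "f \<in> Hom C c d" "x \<in> M c"
  shows "act f x \<in> M d"
proof -
  have "\<forall>f\<in>Mor C. \<forall>x\<in>M (Dom C f). act f x \<in> M (Cod C f)"
    using C_module by (simp add: C_module_def)
  with assms Hom_memD[OF assms(1)] show ?thesis by blast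
qed

lemma act_linear:
  assumes "f \<in> Hom C c d"
  shows "linear_on sc (M c) (act f)"
proof -
  have "\<forall>f\<in>Mor C. \<forall>x\<in>M (Dom C f). \<forall>y\<in>M (Dom C f). act f (x + y) = act f x + act f y"
    "\<forall>f\<in>Mor C. \<forall>r. \<forall>x\<in>M (Dom C f). act f (sc r x) = sc r (act f x)"
    using C_module by (simp_all add: C_module_def)
  with Hom_memD(1,2)[OF assms] show ?thesis
    by (simp add: linear_on_def)
qed

lemma act_scale: "f \<in> Hom C c d \<Longrightarrow> x \<in> M c \<Longrightarrow> act f (sc r x) = sc r (act f x)"
  using act_linear by (simp add: linear_on_def)

lemma act_comp:
  assumes "f \<in> Hom C a b" "g \<in> Hom C b c" "x \<in> M a"
  shows "act (Comp C g f) x = act g (act f x)"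
proof -
  have "\<forall>f\<in>Mor C. \<forall>g\<in>Mor C. Cod C f = Dom C g \<longrightarrow>
          (\<forall>x\<in>M (Dom C f). act (Comp C g f) x = act g (act f x))"
    using C_module by (simp add: C_module_def)
  with assms Hom_memD[OF assms(1)] Hom_memD[OF assms(2)] show ?thesis by simp
qed

lemma act_id: "c \<in> Ob C \<Longrightarrow> x \<in> M c \<Longrightarrow> act (Idm C c) x = x"
  using C_module by (simp add: C_module_def)

lemma orbit_span_submodule:
  assumes E: "E \<subseteq> Sigma (Ob C) M"
  shows "submodule C sc M act (\<lambda>c. span {act u x | u x z. (z, x) \<in> E \<and> u \<in> Hom C z c})"
proof -
  define orbit where "orbit c = {act u x | u x z. (z, x) \<in> E \<and> u \<in> Hom C z c}" for c
  have orbit_M: "orbit c \<subseteq> M c" for c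
  proof
    fix y assume "y \<in> orbit c"
    then obtain u x z where "y = act u x" "(z, x) \<in> E" "u \<in> Hom C z c"
      unfolding orbit_def by blast
    with E show "y \<in> M c"
      using act_M by blast
  qed
  have "act f ` span (orbit (Dom C f)) \<subseteq> span (orbit (Cod C f))" if f: "f \<in> Mor C" for f
  proof -
    have fH: "f \<in> Hom C (Dom C f) (Cod C f)"
      using f by (simp add: Hom_def)
    have "act f y \<in> span (orbit (Cod C f))" if y_orbit: "y \<in> orbit (Dom C f)" for y
    proof -
      obtain u x z where y: "y = act u x" and zx: "(z, x) \<in> E" and u: "u \<in> Hom C z (Dom C f)"
        using y_orbit unfolding orbit_def by blast
      have "act f y = act (Comp C f u) x"
        using y act_comp[OF u fH] zx E by auto
      then show ?thesis
        using zx comp_in_Hom[OF u fH] unfolding orbit_def by (blast intro: span_base)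
    qed
    then show ?thesis
      using linear_on_span_subset[OF M_subspace[OF Hom_memD(4)[OF fH]] subspace_span act_linear[OF fH]
          orbit_M] by blast
  qed
  then show ?thesis
    unfolding submodule_def orbit_def[symmetric]
    using span_minimal[OF orbit_M M_subspace] by blast
qed

lemma fin_gen_spanning:
  assumes "fin_gen C sc M act"
  obtains E where "finite E" "E \<subseteq> Sigma (Ob C) M"
    "\<And>d. d \<in> Ob C \<Longrightarrow> M d \<subseteq> span {act u x | u x z. (z, x) \<in> E \<and> u \<in> Hom C z d}"
proof -
  from assms obtain E where "finite E \<and> E \<subseteq> Sigma (Ob C) M \<and>
      (\<forall>N. submodule C sc M act N \<and> (\<forall>(c, x)\<in>E. x \<in> N c) \<longrightarrow> (\<forall>c\<in>Ob C. N c = M c))"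
    unfolding fin_gen_def by (rule exE)
  then have E: "finite E" "E \<subseteq> Sigma (Ob C) M"
    and minimal: "\<forall>N. submodule C sc M act N \<and> (\<forall>(c, x)\<in>E. x \<in> N c) \<longrightarrow> (\<forall>c\<in>Ob C. N c = M c)"
    by auto
  define N where "N = (\<lambda>c. span {act u x | u x z. (z, x) \<in> E \<and> u \<in> Hom C z c})"
  have "x \<in> N c" if cx: "(c, x) \<in> E" for c x
  proof -
    have "c \<in> Ob C" "x \<in> M c"
      using cx E(2) by auto
    then have "act (Idm C c) x = x" "Idm C c \<in> Hom C c c"
      using act_id id_in_Hom by simp_all
    then have "x \<in> {act u y | u y z. (z, y) \<in> E \<and> u \<in> Hom C z c}"
      using cx by force
    then show ?thesis
      unfolding N_def by (rule span_base)
  qed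
  moreover have "submodule C sc M act N"
    unfolding N_def by (rule orbit_span_submodule[OF E(2)])
  ultimately have "\<forall>c\<in>Ob C. N c = M c"
    using minimal by blast
  then show thesis
    using that[OF E] unfolding N_def by simp
qed

lemma coinv_stabilize_module:
  assumes "fin_gen C sc M act"
  shows "coinv_stabilize C sc M (\<lambda>_. {}) act"
proof -
  obtain E where E: "finite E" "E \<subseteq> Sigma (Ob C) M"
    "\<And>d. d \<in> Ob C \<Longrightarrow> M d \<subseteq> span {act u x | u x z. (z, x) \<in> E \<and> u \<in> Hom C z d}"
    using fin_gen_spanning[OF assms] by blast
  interpret fg_presented_module C sc M "\<lambda>_. {}" act E
    using M_subspace act_M act_linear act_comp E by unfold_locales auto
  show ?thesis
    by (rule coinv_stabilizes)
qed

end

locale free_tensor = FI_module C sc M act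
  for C :: "('o, 'm) cat" and sc :: "complex \<Rightarrow> 'v::ab_group_add \<Rightarrow> 'v" and M act +
  fixes N :: nat and cs :: "nat \<Rightarrow> 'o" and ns :: "nat \<Rightarrow> nat"
    and \<rho> :: "nat \<Rightarrow> 'm \<Rightarrow> nat \<Rightarrow> nat \<Rightarrow> complex"
  assumes cs_Ob: "k < N \<Longrightarrow> cs k \<in> Ob C"
begin

sublocale tensor: vector_space "fscale sc"
  by (rule vector_space_fscale) unfold_locales

abbreviation TA where "TA \<equiv> tens_A C N cs ns M"
abbreviation TR where "TR \<equiv> tens_R C sc N cs ns \<rho> M"
abbreviation TAct where "TAct \<equiv> tens_act C N cs ns act"

lemma M_zero: "c \<in> Ob C \<Longrightarrow> 0 \<in> M c"
  using subspace_0[OF M_subspace] .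

lemma act_zero: "f \<in> Hom C c d \<Longrightarrow> act f 0 = 0"
  using linear_on_zero[OF M_subspace[OF Hom_memD(4)] act_linear] .

lemma single_scale: "single t (sc r x) = fscale sc r (single t x)"
  by (auto simp: single_def fscale_def fun_eq_iff)

lemma TA_iff:
  "\<phi> \<in> TA d \<longleftrightarrow> (\<forall>k f i. \<phi> (k, f, i) \<noteq> 0 \<longrightarrow> k < N \<and> f \<in> Hom C (cs k) d \<and> i < ns k) \<and>
     (\<forall>k<N. \<forall>f\<in>Hom C (cs k) d. \<forall>i<ns k. \<phi> (k, f, i) \<in> M d)"
  by (simp add: tens_A_def)

lemma TA_subspace:
  assumes d: "d \<in> Ob C"
  shows "tensor.subspace (TA d)"
proof (rule tensor.subspaceI)
  show "0 \<in> TA d"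
    unfolding TA_iff using M_zero[OF d] by simp
  show "\<phi> + \<psi> \<in> TA d" if "\<phi> \<in> TA d" "\<psi> \<in> TA d" for \<phi> \<psi>
    using that subspace_add[OF M_subspace[OF d]] unfolding TA_iff
    by (metis add.right_neutral plus_fun_apply)
  show "fscale sc r \<phi> \<in> TA d" if "\<phi> \<in> TA d" for r \<phi>
    using that subspace_scale[OF M_subspace[OF d]] unfolding TA_iff fscale_def
    by (metis scale_zero_right)
qed

lemma single_in_TA:
  "k < N \<Longrightarrow> f \<in> Hom C (cs k) d \<Longrightarrow> i < ns k \<Longrightarrow> m \<in> M d \<Longrightarrow> single (k, f, i) m \<in> TA d"
  unfolding TA_iff single_def using M_zero Hom_memD(5) by auto

lemma TAct_image:
  assumes h: "h \<in> Hom C c d" and "k < N" "i < ns k" and u: "u \<in> Hom C (cs k) c"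
  shows "TAct h \<phi> (k, Comp C h u, i) = act h (\<phi> (k, u, i))"
proof -
  have "{f \<in> Hom C (cs k) (Dom C h). Comp C h f = Comp C h u} = {u}"
    using mono_cancel[OF _ u h] u Hom_memD(2)[OF h] by auto
  with assms(2,3) show ?thesis
    by (simp add: tens_act_def)
qed

lemma TAct_cases:
  assumes h: "h \<in> Hom C c d"
  obtains (zero) "\<And>\<phi>. TAct h \<phi> t = 0"
    | (image) k u i where "k < N" "i < ns k" "u \<in> Hom C (cs k) c" "t = (k, Comp C h u, i)"
proof -
  obtain k F i where t: "t = (k, F, i)"
    by (cases t) auto
  show thesis
  proof (cases "k < N \<and> i < ns k \<and> (\<exists>u\<in>Hom C (cs k) c. Comp C h u = F)")
    case True
    then show ?thesis
      using that(2) t by blast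
  next
    case False
    have "TAct h \<phi> t = 0" for \<phi>
    proof (cases "k < N \<and> i < ns k")
      case True
      with False have empty: "{f \<in> Hom C (cs k) (Dom C h). Comp C h f = F} = {}"
        using Hom_memD(2)[OF h] by auto
      from True have "TAct h \<phi> t =
          (\<Sum>f\<in>{f \<in> Hom C (cs k) (Dom C h). Comp C h f = F}. act h (\<phi> (k, f, i)))"
        by (simp add: tens_act_def t)
      then show ?thesis
        unfolding empty by simp
    qed (auto simp: tens_act_def t)
    then show ?thesis
      by (rule that(1))
  qed
qed

lemma TAct_TA:
  assumes h: "h \<in> Hom C c d" and \<phi>: "\<phi> \<in> TA c"
  shows "TAct h \<phi> \<in> TA d"
  unfolding TA_iff
proof (rule conjI; intro allI impI ballI)
  fix k F i assume nz: "TAct h \<phi> (k, F, i) \<noteq> 0"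
  then show "k < N \<and> F \<in> Hom C (cs k) d \<and> i < ns k"
  proof (cases rule: TAct_cases[OF h, of "(k, F, i)", case_names zero image])
    case (image k' u i')
    then show ?thesis
      using comp_in_Hom[OF image(3) h] by simp
  qed simp
next
  fix k F i assume "k < N" "F \<in> Hom C (cs k) d" "i < ns k"
  show "TAct h \<phi> (k, F, i) \<in> M d"
  proof (cases rule: TAct_cases[OF h, of "(k, F, i)", case_names zero image])
    case zero
    then show ?thesis
      using M_zero[OF Hom_memD(5)[OF h]] by simp
  next
    case (image k' u i')
    have "\<phi> (k', u, i') \<in> M c"
      using \<phi> image(1-3) unfolding TA_iff by blast
    then show ?thesis
      using TAct_image[OF h image(1-3)] image(4) act_M[OF h] by simp
  qed
qed

lemma TAct_linear:
  assumes h: "h \<in> Hom C c d"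
  shows "linear_on (fscale sc) (TA c) (TAct h)"
  unfolding linear_on_def
proof (intro conjI ballI allI ext)
  fix \<phi> \<psi> t assume \<phi>: "\<phi> \<in> TA c" and \<psi>: "\<psi> \<in> TA c"
  show "TAct h (\<phi> + \<psi>) t = (TAct h \<phi> + TAct h \<psi>) t"
  proof (cases rule: TAct_cases[OF h, of t, case_names zero image])
    case (image k u i)
    have "\<phi> (k, u, i) \<in> M c" "\<psi> (k, u, i) \<in> M c"
      using \<phi> \<psi> image(1-3) unfolding TA_iff by blast+
    then show ?thesis
      using image(4) TAct_image[OF h image(1-3)] act_linear[OF h] by (simp add: linear_on_def)
  qed simp
next
  fix r \<phi> t assume \<phi>: "\<phi> \<in> TA c"
  show "TAct h (fscale sc r \<phi>) t = fscale sc r (TAct h \<phi>) t"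
  proof (cases rule: TAct_cases[OF h, of t, case_names zero image])
    case (image k u i)
    have "\<phi> (k, u, i) \<in> M c"
      using \<phi> image(1-3) unfolding TA_iff by blast
    then show ?thesis
      using image(4) TAct_image[OF h image(1-3)] act_linear[OF h]
      by (simp add: linear_on_def fscale_def)
  qed (simp add: fscale_def)
qed

lemma TAct_single:
  assumes h: "h \<in> Hom C c d" and k0: "k0 < N" and i0: "i0 < ns k0" and f0: "f0 \<in> Hom C (cs k0) c"
  shows "TAct h (single (k0, f0, i0) m) = single (k0, Comp C h f0, i0) (act h m)"
proof
  fix t
  show "TAct h (single (k0, f0, i0) m) t = single (k0, Comp C h f0, i0) (act h m) t"
  proof (cases "t = (k0, Comp C h f0, i0)")
    case True
    then show ?thesis
      using TAct_image[OF h k0 i0 f0] by (simp add: single_def)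
  next
    case False
    then show ?thesis
    proof (cases rule: TAct_cases[OF h, of t, case_names zero image])
      case (image k u i)
      then have "(k, u, i) \<noteq> (k0, f0, i0)"
        using False by auto
      have "TAct h (single (k0, f0, i0) m) t = act h (single (k0, f0, i0) m (k, u, i))"
        using TAct_image[OF h image(1-3)] image(4) by simp
      also have "\<dots> = 0"
        using \<open>(k, u, i) \<noteq> (k0, f0, i0)\<close> act_zero[OF h] by (auto simp: single_def)
      also have "\<dots> = single (k0, Comp C h f0, i0) (act h m) t"
        using False by (simp add: single_def)
      finally show ?thesis .
    qed (simp add: single_def)
  qed
qed

lemma TAct_comp_at_image:
  assumes f: "f \<in> Hom C a b" and g: "g \<in> Hom C b c" and \<phi>: "\<phi> \<in> TA a"
    and k: "k < N" and i: "i < ns k" and u: "u \<in> Hom C (cs k) a"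
  shows "TAct (Comp C g f) \<phi> (k, Comp C g (Comp C f u), i)
    = TAct g (TAct f \<phi>) (k, Comp C g (Comp C f u), i)"
proof -
  have "\<phi> (k, u, i) \<in> M a"
    using \<phi> k i u unfolding TA_iff by blast
  then have "act (Comp C g f) (\<phi> (k, u, i)) = act g (act f (\<phi> (k, u, i)))"
    by (rule act_comp[OF f g])
  then show ?thesis
    using comp_assoc[OF u f g] TAct_image[OF comp_in_Hom[OF f g] k i u]
      TAct_image[OF g k i comp_in_Hom[OF u f]] TAct_image[OF f k i u] by simp
qed

lemma TAct_comp:
  assumes f: "f \<in> Hom C a b" and g: "g \<in> Hom C b c" and \<phi>: "\<phi> \<in> TA a"
  shows "TAct (Comp C g f) \<phi> = TAct g (TAct f \<phi>)"
proof
  fix t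
  have gf: "Comp C g f \<in> Hom C a c"
    using comp_in_Hom[OF f g] .
  have image_case: "TAct (Comp C g f) \<phi> t = TAct g (TAct f \<phi>) t"
    if "k < N" "i < ns k" "u \<in> Hom C (cs k) a" "t = (k, Comp C g (Comp C f u), i)" for k u i
    using TAct_comp_at_image[OF f g \<phi> that(1-3)] that(4) by simp
  show "TAct (Comp C g f) \<phi> t = TAct g (TAct f \<phi>) t"
  proof (cases rule: TAct_cases[OF gf, of t, case_names zero image])
    case (image k u i)
    then have "t = (k, Comp C g (Comp C f u), i)"
      using comp_assoc[OF image(3) f g] by simp
    then show ?thesis
      by (rule image_case[OF image(1-3)])
  next
    case zero
    note lhs = this
    show ?thesis
    proof (cases rule: TAct_cases[OF g, of t, case_names zero image])
      case (image k w i)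
      note w = this
      show ?thesis
      proof (cases rule: TAct_cases[OF f, of "(k, w, i)", case_names zero image])
        case zero
        then show ?thesis
          using lhs w TAct_image[OF g w(1-3)] act_zero[OF g] by simp
      next
        case (image k' u i')
        then have "t = (k', Comp C g (Comp C f u), i')"
          using w(4) by simp
        then show ?thesis
          by (rule image_case[OF image(1-3)])
      qed
    qed (simp add: lhs)
  qed
qed

lemma TR_elem:
  assumes "r \<in> TR c"
  obtains k f g j m where "r = single (k, Comp C f g, j) m - (\<Sum>i<ns k. single (k, f, i) (sc (\<rho> k g i j) m))"
    "k < N" "f \<in> Hom C (cs k) c" "g \<in> Aut C (cs k)" "j < ns k" "m \<in> M c"
  using assms unfolding tens_R_def by blast

lemma TR_subset_TA:
  assumes c: "c \<in> Ob C"
  shows "TR c \<subseteq> TA c"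
proof
  fix r assume "r \<in> TR c"
  then obtain k f g j m where r: "r = single (k, Comp C f g, j) m - (\<Sum>i<ns k. single (k, f, i) (sc (\<rho> k g i j) m))"
    and k: "k < N" and f: "f \<in> Hom C (cs k) c" and g: "g \<in> Aut C (cs k)" and j: "j < ns k"
    and m: "m \<in> M c"
    by (rule TR_elem)
  have gH: "g \<in> Hom C (cs k) (cs k)"
    using Aut_in_Hom[OF g] .
  have "single (k, Comp C f g, j) m \<in> TA c"
    using single_in_TA[OF k comp_in_Hom[OF gH f] j m] .
  moreover have "(\<Sum>i<ns k. single (k, f, i) (sc (\<rho> k g i j) m)) \<in> TA c"
    using single_in_TA[OF k f _ subspace_scale[OF M_subspace[OF c] m]]
    by (intro tensor.subspace_sum[OF TA_subspace[OF c]]) simp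
  ultimately show "r \<in> TA c"
    unfolding r by (rule tensor.subspace_diff[OF TA_subspace[OF c]])
qed

lemma TAct_TR:
  assumes h: "h \<in> Hom C c d" and r: "r \<in> TR c"
  shows "TAct h r \<in> TR d"
proof -
  obtain k f g j m where r: "r = single (k, Comp C f g, j) m - (\<Sum>i<ns k. single (k, f, i) (sc (\<rho> k g i j) m))"
    and k: "k < N" and f: "f \<in> Hom C (cs k) c" and g: "g \<in> Aut C (cs k)"
    and j: "j < ns k" and m: "m \<in> M c"
    using r by (rule TR_elem)
  have gH: "g \<in> Hom C (cs k) (cs k)"
    using Aut_in_Hom[OF g] .
  have c: "c \<in> Ob C"
    using Hom_memD(4)[OF h] .
  have sm: "sc s m \<in> M c" for s
    using subspace_scale[OF M_subspace[OF c] m] .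
  have summands: "single (k, f, i) (sc (\<rho> k g i j) m) \<in> TA c" if "i \<in> {..<ns k}" for i
    using single_in_TA[OF k f _ sm] that by simp
  have "TAct h r = TAct h (single (k, Comp C f g, j) m)
      - TAct h (\<Sum>i<ns k. single (k, f, i) (sc (\<rho> k g i j) m))"
    unfolding r
    by (rule tensor.linear_on_diff[OF TA_subspace[OF c] TAct_linear[OF h]
          single_in_TA[OF k comp_in_Hom[OF gH f] j m]
          tensor.subspace_sum[OF TA_subspace[OF c] summands]])
  also have "TAct h (\<Sum>i<ns k. single (k, f, i) (sc (\<rho> k g i j) m))
      = (\<Sum>i<ns k. TAct h (single (k, f, i) (sc (\<rho> k g i j) m)))"
    by (rule tensor.linear_on_sum[OF TA_subspace[OF c] TAct_linear[OF h] summands])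
  finally have "TAct h r = single (k, Comp C (Comp C h f) g, j) (act h m)
      - (\<Sum>i<ns k. single (k, Comp C h f, i) (sc (\<rho> k g i j) (act h m)))"
    using TAct_single[OF h k j comp_in_Hom[OF gH f]] TAct_single[OF h k _ f]
      comp_assoc[OF gH f h] act_scale[OF h m] by (simp add: fun_eq_iff)
  then show ?thesis
    unfolding tens_R_def using k comp_in_Hom[OF f h] g j act_M[OF h m] by blast
qed

definition tens_index :: "'o \<Rightarrow> (nat \<times> 'm \<times> nat) set" where
  "tens_index d = (SIGMA k:{..<N}. Hom C (cs k) d \<times> {..<ns k})"

lemma finite_tens_index: "d \<in> Ob C \<Longrightarrow> finite (tens_index d)"
  unfolding tens_index_def using finite_Hom cs_Ob by (intro finite_SigmaI finite_cartesian_product) auto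

lemma TA_decompose:
  assumes d: "d \<in> Ob C" and \<phi>: "\<phi> \<in> TA d"
  shows "\<phi> = (\<Sum>t\<in>tens_index d. single t (\<phi> t))"
proof
  fix x
  have "(\<Sum>t\<in>tens_index d. single t (\<phi> t)) x = (\<Sum>t\<in>tens_index d. if x = t then \<phi> t else 0)"
    by (simp add: sum_fun_apply single_def)
  also have "\<dots> = (if x \<in> tens_index d then \<phi> x else 0)"
    using finite_tens_index[OF d] by simp
  also have "\<dots> = \<phi> x"
    using \<phi> unfolding TA_iff tens_index_def by (cases x) auto
  finally show "\<phi> x = (\<Sum>t\<in>tens_index d. single t (\<phi> t)) x" ..
qed

lemma single_act_factors_through_weak_pushout:
  assumes k: "k < N" and i: "i < ns k" and f: "f \<in> Hom C (cs k) d" and h: "h \<in> Hom C z d"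
    and x: "x \<in> M z" and q1: "q1 \<in> Hom C s (cs k)" and q2: "q2 \<in> Hom C s z"
    and pb: "pullback_square C q1 q2 f h" and po: "weak_pushout C q1 q2 (w, g1, g2)"
  shows "\<exists>u\<in>Hom C w d. TAct u (single (k, g1, i) (act g2 x)) = single (k, f, i) (act h x)"
proof -
  have g1: "g1 \<in> Hom C (cs k) w" and g2: "g2 \<in> Hom C z w"
    and factor: "\<exists>u\<in>Hom C w d. Comp C u g1 = f \<and> Comp C u g2 = h"
    using po f h pb Hom_memD(3)[OF q1] Hom_memD(3)[OF q2] by (auto simp: weak_pushout_def)
  then obtain u where u: "u \<in> Hom C w d" "Comp C u g1 = f" "Comp C u g2 = h"
    by blast
  have "TAct u (single (k, g1, i) (act g2 x)) = single (k, f, i) (act u (act g2 x))"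
    using TAct_single[OF u(1) k i g1] u(2) by simp
  also have "act u (act g2 x) = act h x"
    using act_comp[OF g2 u(1) x] u(3) by simp
  finally show ?thesis
    using u(1) by blast
qed

lemma tensor_generators:
  assumes E: "finite E" "E \<subseteq> Sigma (Ob C) M"
  obtains GG where "finite GG" "\<And>w y. (w, y) \<in> GG \<Longrightarrow> w \<in> Ob C \<and> y \<in> TA w"
    "\<And>k i f d z x h. k < N \<Longrightarrow> i < ns k \<Longrightarrow> f \<in> Hom C (cs k) d \<Longrightarrow> (z, x) \<in> E \<Longrightarrow>
       h \<in> Hom C z d \<Longrightarrow> \<exists>(w, y)\<in>GG. \<exists>u\<in>Hom C w d. TAct u y = single (k, f, i) (act h x)"
proof -
  obtain S where S: "finite S" "S \<subseteq> Ob C"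
    and pb: "\<And>c1 c2 d f1 f2. c1 \<in> cs ` {..<N} \<Longrightarrow> f1 \<in> Hom C c1 d \<Longrightarrow> f2 \<in> Hom C c2 d \<Longrightarrow>
       \<exists>s\<in>S. \<exists>q1\<in>Hom C s c1. \<exists>q2\<in>Hom C s c2. pullback_square C q1 q2 f1 f2"
    by (rule pullback_with_apex_in[of "cs ` {..<N}"]) (use cs_Ob in auto)
  define po where "po q1 q2 = (SOME w. weak_pushout C q1 q2 w)" for q1 q2
  have po: "weak_pushout C q1 q2 (po q1 q2)" if "q1 \<in> Hom C s c1" "q2 \<in> Hom C s c2" for s c1 c2 q1 q2
    unfolding po_def using weak_pushout_exists[OF that] by (rule someI_ex)
  define I where "I = (SIGMA k:{..<N}. SIGMA i:{..<ns k}. SIGMA e:E. SIGMA s:S.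
    Hom C s (cs k) \<times> Hom C s (fst e))"
  define gen where "gen = (\<lambda>(k :: nat, i :: nat, (z :: 'o, x), s :: 'o, q1, q2).
    case po q1 q2 of (w, g1, g2) \<Rightarrow> (w, single (k, g1, i) (act g2 x)))"
  show thesis
  proof (rule that[of "gen ` I"])
    have "finite (Hom C s c)" if "s \<in> S" "c \<in> Ob C" for s c
      using finite_Hom S(2) that by blast
    then show "finite (gen ` I)"
      unfolding I_def using E S(1) cs_Ob by (intro finite_imageI finite_SigmaI) auto
  next
    fix w y assume "(w, y) \<in> gen ` I"
    then obtain k i z x s q1 q2 where t: "(k, i, (z, x), s, q1, q2) \<in> I"
      and wy: "gen (k, i, (z, x), s, q1, q2) = (w, y)"
      by (auto simp: image_iff)
    then have k: "k < N" and i: "i < ns k" and zx: "(z, x) \<in> E"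
      and q1: "q1 \<in> Hom C s (cs k)" and q2: "q2 \<in> Hom C s z"
      by (auto simp: I_def)
    obtain w' g1 g2 where po_eq: "po q1 q2 = (w', g1, g2)"
      by (cases "po q1 q2") auto
    with po[OF q1 q2] have g1: "g1 \<in> Hom C (cs k) w'" and g2: "g2 \<in> Hom C z w'"
      using Hom_memD(3)[OF q1] Hom_memD(3)[OF q2] by (auto simp: weak_pushout_def)
    have "w = w'" "y = single (k, g1, i) (act g2 x)"
      using wy po_eq by (auto simp: gen_def)
    moreover have "x \<in> M z"
      using zx E(2) by auto
    ultimately show "w \<in> Ob C \<and> y \<in> TA w"
      using Hom_memD(5)[OF g1] single_in_TA[OF k g1 i act_M[OF g2]] by simp
  next
    fix k i f d z x h
    assume k: "k < N" and i: "i < ns k" and f: "f \<in> Hom C (cs k) d" and zx: "(z, x) \<in> E"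
      and h: "h \<in> Hom C z d"
    obtain s q1 q2 where s: "s \<in> S" and q1: "q1 \<in> Hom C s (cs k)" and q2: "q2 \<in> Hom C s z"
      and pbq: "pullback_square C q1 q2 f h"
      using pb[OF _ f h] k by blast
    obtain w g1 g2 where po_eq: "po q1 q2 = (w, g1, g2)"
      by (cases "po q1 q2") auto
    have "(k, i, (z, x), s, q1, q2) \<in> I"
      unfolding I_def using k i zx s q1 q2 by auto
    then have "(w, single (k, g1, i) (act g2 x)) \<in> gen ` I"
      using po_eq by (force simp: gen_def)
    moreover have "x \<in> M z"
      using zx E(2) by auto
    ultimately show "\<exists>(w, y)\<in>gen ` I. \<exists>u\<in>Hom C w d. TAct u y = single (k, f, i) (act h x)"
      using single_act_factors_through_weak_pushout[OF k i f h _ q1 q2 pbq po[OF q1 q2, unfolded po_eq]]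
      by blast
  qed
qed

lemma TA_spanned:
  assumes E: "E \<subseteq> Sigma (Ob C) M"
    and E_spans: "M d \<subseteq> span {act u x | u x z. (z, x) \<in> E \<and> u \<in> Hom C z d}"
    and factor: "\<And>k i f z x h. k < N \<Longrightarrow> i < ns k \<Longrightarrow> f \<in> Hom C (cs k) d \<Longrightarrow> (z, x) \<in> E \<Longrightarrow>
       h \<in> Hom C z d \<Longrightarrow> \<exists>(w, y)\<in>GG. \<exists>u\<in>Hom C w d. TAct u y = single (k, f, i) (act h x)"
    and d: "d \<in> Ob C"
  shows "TA d \<subseteq> tensor.span {TAct u y | u y w. (w, y) \<in> GG \<and> u \<in> Hom C w d}"
proof
  define T where "T = tensor.span {TAct u y | u y w. (w, y) \<in> GG \<and> u \<in> Hom C w d}"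
  have single_T: "single t m \<in> T" if t: "t \<in> tens_index d" and m: "m \<in> M d" for t m
  proof -
    obtain k f i where tt: "t = (k, f, i)" and k: "k < N" and f: "f \<in> Hom C (cs k) d"
      and i: "i < ns k"
      using t by (auto simp: tens_index_def)
    have "subspace {m. single t m \<in> T}"
      unfolding T_def
      by (rule subspaceI) (simp_all add: single_zero single_add single_scale
          tensor.span_zero tensor.span_add tensor.span_scale)
    moreover have "single t y \<in> T"
      if y_orbit: "y \<in> {act u x | u x z. (z, x) \<in> E \<and> u \<in> Hom C z d}" for y
    proof -
      obtain u x z where y: "y = act u x" and zx: "(z, x) \<in> E" and u: "u \<in> Hom C z d"
        using y_orbit by blast
      obtain w y' v where "(w, y') \<in> GG" "v \<in> Hom C w d" "TAct v y' = single t y"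
        using factor[OF k i f zx u] y tt by blast
      then have "single t y \<in> {TAct u y | u y w. (w, y) \<in> GG \<and> u \<in> Hom C w d}"
        by force
      then show ?thesis
        unfolding T_def by (rule tensor.span_base)
    qed
    ultimately show ?thesis
      using span_induct[of m _ "\<lambda>m. single t m \<in> T"] m E_spans by blast
  qed
  fix \<phi> assume \<phi>: "\<phi> \<in> TA d"
  have "(\<Sum>t\<in>tens_index d. single t (\<phi> t)) \<in> T"
    unfolding T_def
  proof (rule tensor.span_sum)
    fix t assume t: "t \<in> tens_index d"
    then have "\<phi> t \<in> M d"
      using \<phi> unfolding TA_iff tens_index_def by auto
    then show "single t (\<phi> t) \<in> tensor.span {TAct u y | u y w. (w, y) \<in> GG \<and> u \<in> Hom C w d}"
      using single_T[OF t] unfolding T_def by blast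
  qed
  then show "\<phi> \<in> tensor.span {TAct u y | u y w. (w, y) \<in> GG \<and> u \<in> Hom C w d}"
    using TA_decompose[OF d \<phi>] unfolding T_def by simp
qed

lemma coinv_stabilize_tensor:
  assumes "fin_gen C sc M act"
  shows "coinv_stabilize C (fscale sc) TA TR TAct"
proof -
  obtain E where E: "finite E" "E \<subseteq> Sigma (Ob C) M"
    and E_spans: "\<And>d. d \<in> Ob C \<Longrightarrow> M d \<subseteq> span {act u x | u x z. (z, x) \<in> E \<and> u \<in> Hom C z d}"
    by (rule fin_gen_spanning[OF assms]) blast
  obtain GG where GG: "finite GG" "\<And>w y. (w, y) \<in> GG \<Longrightarrow> w \<in> Ob C \<and> y \<in> TA w"
    and factor: "\<And>k i f d z x h. k < N \<Longrightarrow> i < ns k \<Longrightarrow> f \<in> Hom C (cs k) d \<Longrightarrow> (z, x) \<in> E \<Longrightarrow>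
       h \<in> Hom C z d \<Longrightarrow> \<exists>(w, y)\<in>GG. \<exists>u\<in>Hom C w d. TAct u y = single (k, f, i) (act h x)"
    by (rule tensor_generators[OF E]) blast
  interpret fg_presented_module C "fscale sc" TA TR TAct GG
  proof unfold_locales
    show "TA d \<subseteq> tensor.span {TAct u y | u y w. (w, y) \<in> GG \<and> u \<in> Hom C w d}" if "d \<in> Ob C" for d
      by (rule TA_spanned[OF E(2) E_spans[OF that] _ that]) (rule factor; assumption)
    show "TAct f x \<in> tensor.span (TR d)" if "f \<in> Hom C c d" "x \<in> TR c" for f c d x
      using TAct_TR[OF that] by (rule tensor.span_base)
  qed (use TA_subspace TR_subset_TA TAct_TA TAct_linear TAct_comp GG in auto)
  show ?thesis
    by (rule coinv_stabilizes)
qed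

end

theorem theoremD:
  fixes C :: "('o, 'm) cat"
    and sc :: "complex \<Rightarrow> 'v::ab_group_add \<Rightarrow> 'v"
    and M :: "'o \<Rightarrow> 'v set"
    and act :: "'m \<Rightarrow> 'v \<Rightarrow> 'v"
  assumes "vector_space sc"
    and "FI_type C"
    and "C_module C sc M act"
    and "fin_gen C sc M act"
  shows "coinv_stabilize C sc M (\<lambda>_. {}) act \<and>
         (\<forall>N cs ns \<rho>. free_data C N cs ns \<rho> \<longrightarrow>
            coinv_stabilize C (fscale sc) (tens_A C N cs ns M) (tens_R C sc N cs ns \<rho> M)
              (tens_act C N cs ns act))"
proof -
  interpret FI_module C sc M act
    using assms(1-3) by (simp add: FI_module_def FI_module_axioms_def FI_category_def)
  have "coinv_stabilize C (fscale sc) (tens_A C N cs ns M) (tens_R C sc N cs ns \<rho> M)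
      (tens_act C N cs ns act)" if "free_data C N cs ns \<rho>" for N cs ns \<rho>
  proof -
    interpret free_tensor C sc M act N cs ns \<rho>
      using that by unfold_locales (simp add: free_data_def)
    show ?thesis
      by (rule coinv_stabilize_tensor[OF assms(4)])
  qed
  then show ?thesis
    using coinv_stabilize_module[OF assms(4)] by blast
qed

end
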